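(* Let $\mathscr{H}$ be a complex Hilbert space and let $B,C$ be Hilbert–Schmidt operators on $\mathscr{H}$. Then $$w_{(2,e)}^2(B,C)\leq\frac12\Big(\max\{|\mathrm{tr}(B^2)|,|\mathrm{tr}(C^2)|\}+|\mathrm{tr}(BC)|+\max\{\|B\|_2^2,\|C\|_2^2\}+|\mathrm{tr}(BC^* )|\Big).$$
   Context: An operator $T$ on $\mathscr{H}$ is Hilbert–Schmidt if $\sum_i\|Te_i\|^2<\infty$ for some (equivalently every) orthonormal basis $\{e_i\}$; its Hilbert–Schmidt norm is $\|T\|_2=(\mathrm{tr}(T^*T))^{1/2}$. For an operator $T$, $\Re(T)=\frac12(T+T^* )$. The Hilbert–Schmidt Euclidean operator radius is $w_{(2,e)}(B,C)=\sup_{\lambda_1,\lambda_2\in\mathbb{C},\ |\lambda_1|^2+|\lambda_2|^2\leq1}\sup_{\theta\in\mathbb{R}}\|\Re(e^{i\theta}(\lambda_1B+\lambda_2C))\|_2$. *)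

theory Defs
  imports "HOL-Analysis.Analysis"
begin

text \<open>Complex inner product spaces and complex Hilbert spaces
  (not available in the distribution libraries). The inner product is
  linear in the second argument and conjugate-linear in the first.\<close>

class complex_inner = real_normed_vector +
  fixes scaleC :: "complex \<Rightarrow> 'a \<Rightarrow> 'a"
    and cinner :: "'a \<Rightarrow> 'a \<Rightarrow> complex"
  assumes scaleC_of_real: "scaleC (complex_of_real r) x = scaleR r x"
    and scaleC_add_right: "scaleC a (x + y) = scaleC a x + scaleC a y"
    and scaleC_add_left: "scaleC (a + b) x = scaleC a x + scaleC b x"
    and scaleC_scaleC: "scaleC a (scaleC b x) = scaleC (a * b) x"
    and scaleC_one: "scaleC 1 x = x"
    and cinner_commute: "cinner x y = cnj (cinner y x)"
    and cinner_add_right: "cinner x (y + z) = cinner x y + cinner x z"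
    and cinner_scaleC_right: "cinner x (scaleC a y) = a * cinner x y"
    and cinner_self_norm: "cinner x x = complex_of_real ((norm x)\<^sup>2)"

class chilbert_space = complex_inner + complete_space

definition bounded_clinear_op :: "('a::complex_inner \<Rightarrow> 'a) \<Rightarrow> bool" where
  "bounded_clinear_op T \<longleftrightarrow>
     (\<forall>x y. T (x + y) = T x + T y) \<and> (\<forall>c x. T (scaleC c x) = scaleC c (T x)) \<and>
     (\<exists>K. \<forall>x. norm (T x) \<le> norm x * K)"

definition adj :: "('a::complex_inner \<Rightarrow> 'a) \<Rightarrow> ('a \<Rightarrow> 'a)" where
  "adj T = (SOME S. \<forall>x y. cinner (T x) y = cinner x (S y))"

definition cspan :: "'a::complex_inner set \<Rightarrow> 'a set" where
  "cspan E = {\<Sum>e\<in>F. scaleC (c e) e | F c. finite F \<and> F \<subseteq> E}"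

definition onb :: "'a::complex_inner set \<Rightarrow> bool" where
  "onb E \<longleftrightarrow> (\<forall>e\<in>E. norm e = 1) \<and> (\<forall>e\<in>E. \<forall>f\<in>E. e \<noteq> f \<longrightarrow> cinner e f = 0)
      \<and> closure (cspan E) = UNIV"

definition hilbert_schmidt :: "('a::complex_inner \<Rightarrow> 'a) \<Rightarrow> bool" where
  "hilbert_schmidt T \<longleftrightarrow> bounded_clinear_op T \<and>
     (\<exists>E. onb E \<and> (\<lambda>e. (norm (T e))\<^sup>2) summable_on E)"

definition trace :: "('a::complex_inner \<Rightarrow> 'a) \<Rightarrow> complex" where
  "trace T = infsum (\<lambda>e. cinner e (T e)) (SOME E. onb E)"

definition hs_norm :: "('a::complex_inner \<Rightarrow> 'a) \<Rightarrow> real" where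
  "hs_norm T = sqrt (Re (trace (adj T \<circ> T)))"

definition ReOp :: "('a::complex_inner \<Rightarrow> 'a) \<Rightarrow> ('a \<Rightarrow> 'a)" where
  "ReOp T = (\<lambda>x. scaleC (1/2) (T x + adj T x))"

definition w2e :: "('a::complex_inner \<Rightarrow> 'a) \<Rightarrow> ('a \<Rightarrow> 'a) \<Rightarrow> real" where
  "w2e B C = Sup {hs_norm (ReOp (\<lambda>x. scaleC (exp (\<i> * complex_of_real \<theta>))
                      (scaleC l1 (B x) + scaleC l2 (C x))))
                 | l1 l2 \<theta>. (cmod l1)\<^sup>2 + (cmod l2)\<^sup>2 \<le> 1}"

end

theory Submission
  imports Defs
begin

text \<open>Write \<open>S = e\<^sup>i\<^sup>\<theta>(\<lambda>\<^sub>1B + \<lambda>\<^sub>2C) = aB + bC\<close>. Since \<open>tr(S\<^sup>*S) = tr(SS\<^sup>*)\<close> and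
  \<open>tr(S\<^sup>*\<^sup>2)\<close> is the conjugate of \<open>tr(S\<^sup>2)\<close>, the self-adjoint operator \<open>Re S\<close> satisfies
  \<open>\<parallel>Re S\<parallel>\<^sub>2\<^sup>2 = (\<parallel>S\<parallel>\<^sub>2\<^sup>2 + Re tr(S\<^sup>2))/2\<close>. Expanding,
  \<open>\<parallel>S\<parallel>\<^sub>2\<^sup>2 = |a|\<^sup>2\<parallel>B\<parallel>\<^sub>2\<^sup>2 + |b|\<^sup>2\<parallel>C\<parallel>\<^sub>2\<^sup>2 + 2 Re(a b\<^sup>* tr(BC\<^sup>*))\<close> and, by \<open>tr(CB) = tr(BC)\<close>,
  \<open>tr(S\<^sup>2) = a\<^sup>2tr(B\<^sup>2) + 2ab tr(BC) + b\<^sup>2tr(C\<^sup>2)\<close>. Both are bounded by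
  \<open>x\<^sup>2\<alpha> + y\<^sup>2\<beta> + 2xy\<gamma> \<le> max \<alpha> \<beta> + \<gamma>\<close> for \<open>x = |a|\<close>, \<open>y = |b|\<close>, \<open>x\<^sup>2 + y\<^sup>2 \<le> 1\<close>.
  The Hilbert space facts used (adjoints of Hilbert--Schmidt operators exist, the
  Hilbert--Schmidt sum does not depend on the basis, the trace is cyclic) all come from
  Parseval's identity and exchanging the order of summation in
  \<open>\<Sum>\<^sub>e \<Sum>\<^sub>f \<langle>Xe,f\<rangle>\<langle>f,Ye\<rangle>\<close>.\<close>

section \<open>Complex inner product spaces\<close>

lemma cnj_mult_self: "cnj z * z = complex_of_real ((cmod z)\<^sup>2)"
  by (metis complex_norm_square of_real_power mult.commute)

context complex_inner
begin

lemma scaleC_zero_right [simp]: "scaleC a 0 = 0"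
  using scaleC_add_right[of a 0 0] by simp

lemma scaleC_zero_left [simp]: "scaleC 0 x = 0"
  using scaleC_add_left[of 0 0 x] by simp

lemma scaleC_minus_left: "scaleC (- a) x = - scaleC a x"
  using scaleC_add_left[of a "- a" x] by (simp add: minus_unique)

lemma scaleC_diff_left: "scaleC (a - b) x = scaleC a x - scaleC b x"
  using scaleC_add_left[of a "- b" x] by (simp add: scaleC_minus_left)

lemma cinner_add_left: "cinner (x + y) z = cinner x z + cinner y z"
  by (metis cinner_commute cinner_add_right complex_cnj_add)

lemma cinner_scaleC_left: "cinner (scaleC a x) y = cnj a * cinner x y"
  by (metis cinner_commute cinner_scaleC_right complex_cnj_mult complex_cnj_cnj)

lemma cinner_zero_right [simp]: "cinner x 0 = 0"
  using cinner_add_right[of x 0 0] by simp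

lemma cinner_zero_left [simp]: "cinner 0 x = 0"
  using cinner_add_left[of 0 0 x] by simp

lemma cinner_minus_right: "cinner x (- y) = - cinner x y"
  using cinner_add_right[of x y "- y"] by (simp add: group_add_class.minus_unique)

lemma cinner_minus_left: "cinner (- x) y = - cinner x y"
  using cinner_add_left[of x "- x" y] by (simp add: group_add_class.minus_unique)

lemma cinner_diff_right: "cinner x (y - z) = cinner x y - cinner x z"
  using cinner_add_right[of x y "- z"] by (simp add: cinner_minus_right)

lemma cinner_diff_left: "cinner (x - y) z = cinner x z - cinner y z"
  using cinner_add_left[of x "- y" z] by (simp add: cinner_minus_left)

lemma cinner_sum_right: "cinner x (sum f A) = (\<Sum>i\<in>A. cinner x (f i))"
  by (induction A rule: infinite_finite_induct) (auto simp: cinner_add_right)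

lemma cinner_sum_left: "cinner (sum f A) x = (\<Sum>i\<in>A. cinner (f i) x)"
  by (induction A rule: infinite_finite_induct) (auto simp: cinner_add_left)

lemma cinner_scaleR_right: "cinner x (scaleR r y) = complex_of_real r * cinner x y"
  by (metis cinner_scaleC_right scaleC_of_real)

lemma cinner_scaleR_left: "cinner (scaleR r x) y = complex_of_real r * cinner x y"
  by (metis cinner_scaleC_left scaleC_of_real complex_cnj_complex_of_real)

lemma norm_sq_cinner: "(norm x)\<^sup>2 = Re (cinner x x)"
  by (simp add: cinner_self_norm)

lemma cinner_ext:
  assumes "\<And>z. cinner z x = cinner z y"
  shows "x = y"
  using assms[of "x - y"] cinner_self_norm[of "x - y"] by (simp add: cinner_diff_right)

lemma norm_scaleC: "norm (scaleC a x) = cmod a * norm x"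
proof -
  have "(norm (scaleC a x))\<^sup>2 = Re (cnj a * a * cinner x x)"
    by (metis norm_sq_cinner cinner_scaleC_left cinner_scaleC_right mult.assoc)
  also have "\<dots> = (cmod a * norm x)\<^sup>2"
    by (simp add: cnj_mult_self cinner_self_norm power_mult_distrib)
  finally show ?thesis
    by (simp add: power2_eq_iff_nonneg)
qed

lemma norm_add_sq: "(norm (x + y))\<^sup>2 = (norm x)\<^sup>2 + (norm y)\<^sup>2 + 2 * Re (cinner x y)"
proof -
  have "(norm (x + y))\<^sup>2 = Re (cinner x x + cinner x y + cinner y x + cinner y y)"
    by (simp add: norm_sq_cinner cinner_add_left cinner_add_right add.assoc)
  then show ?thesis
    by (subst (asm) cinner_commute[of y x]) (simp add: norm_sq_cinner)
qed

lemma norm_cinner_le: "cmod (cinner x y) \<le> norm x * norm y"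
proof (cases "y = 0")
  case True
  then show ?thesis by simp
next
  case False
  then have ny: "norm y > 0" by simp
  define c where "c = cinner x y"
  define t where "t = cnj c / complex_of_real ((norm y)\<^sup>2)"
  have sq: "c * cnj c = complex_of_real ((cmod c)\<^sup>2)"
    by (metis cnj_mult_self mult.commute)
  have "0 \<le> (norm (x - scaleC t y))\<^sup>2" by simp
  also have "\<dots> = Re (cinner x x - t * c - cnj t * cnj c + cnj t * t * cinner y y)"
    unfolding c_def
    by (simp add: norm_sq_cinner cinner_diff_left cinner_diff_right cinner_scaleC_left
        cinner_scaleC_right algebra_simps flip: cinner_commute)
  also have "\<dots> = (norm x)\<^sup>2 - (cmod c)\<^sup>2 / (norm y)\<^sup>2"
    unfolding t_def using ny sq
    by (simp add: cinner_self_norm field_simps power2_eq_square)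
  finally have "(cmod c)\<^sup>2 \<le> (norm x * norm y)\<^sup>2"
    using ny by (simp add: field_simps power_mult_distrib)
  then show ?thesis
    unfolding c_def by (meson mult_nonneg_nonneg norm_ge_zero power2_le_imp_le)
qed

end

lemma bounded_linear_cinner_right: "bounded_linear (\<lambda>y. cinner (x::'a::complex_inner) y)"
proof (rule bounded_linear_intro[where K="norm x"])
  show "cinner x (y + z) = cinner x y + cinner x z" for y z
    by (rule cinner_add_right)
  show "cinner x (scaleR r y) = scaleR r (cinner x y)" for r y
    by (simp add: cinner_scaleR_right scaleR_conv_of_real)
  show "norm (cinner x y) \<le> norm y * norm x" for y
    using norm_cinner_le[of x y] by (simp add: mult.commute)
qed

lemma bounded_linear_cinner_left: "bounded_linear (\<lambda>x. cinner x (y::'a::complex_inner))"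
proof (rule bounded_linear_intro[where K="norm y"])
  show "cinner (x + z) y = cinner x y + cinner z y" for x z
    by (rule cinner_add_left)
  show "cinner (scaleR r x) y = scaleR r (cinner x y)" for r x
    by (simp add: cinner_scaleR_left scaleR_conv_of_real)
  show "norm (cinner x y) \<le> norm x * norm y" for x
    using norm_cinner_le[of x y] by simp
qed

section \<open>Orthonormal bases\<close>

lemma onb_cinner:
  assumes "onb E" "e \<in> E" "f \<in> E"
  shows "cinner e f = (if e = f then 1 else 0)"
  using assms unfolding onb_def by (auto simp: cinner_self_norm)

lemma cinner_onb_sum:
  fixes E :: "'a::complex_inner set"
  assumes "onb E" "finite F" "F \<subseteq> E" "e \<in> E"
  shows "cinner e (\<Sum>f\<in>F. scaleC (c f) f) = (if e \<in> F then c e else 0)"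
proof -
  have "cinner e (\<Sum>f\<in>F. scaleC (c f) f) = (\<Sum>f\<in>F. if e = f then c f else 0)"
    unfolding cinner_sum_right cinner_scaleC_right
    using assms by (intro sum.cong) (auto simp: onb_cinner subset_iff)
  also have "\<dots> = (if e \<in> F then c e else 0)"
    using assms(2) by (simp add: sum.delta)
  finally show ?thesis .
qed

lemma norm_sq_onb_sum:
  fixes E :: "'a::complex_inner set"
  assumes "onb E" "finite F" "F \<subseteq> E"
  shows "(norm (\<Sum>f\<in>F. scaleC (c f) f))\<^sup>2 = (\<Sum>f\<in>F. (cmod (c f))\<^sup>2)"
proof -
  have "cinner (\<Sum>f\<in>F. scaleC (c f) f) (\<Sum>f\<in>F. scaleC (c f) f)
      = (\<Sum>g\<in>F. cnj (c g) * cinner g (\<Sum>f\<in>F. scaleC (c f) f))"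
    by (simp add: cinner_sum_left cinner_scaleC_left)
  also have "\<dots> = (\<Sum>g\<in>F. complex_of_real ((cmod (c g))\<^sup>2))"
    using assms
    by (auto simp: cinner_onb_sum cnj_mult_self subset_iff intro!: sum.cong)
  finally show ?thesis
    by (simp add: norm_sq_cinner)
qed

lemma onb_partial_sum_best_approx:
  fixes E :: "'a::complex_inner set"
  assumes "onb E" "finite F" "F \<subseteq> E"
  shows "norm (x - (\<Sum>f\<in>F. scaleC (cinner f x) f)) \<le> norm (x - (\<Sum>f\<in>F. scaleC (d f) f))"
proof -
  define p where "p = (\<Sum>f\<in>F. scaleC (cinner f x) f)"
  define y where "y = (\<Sum>f\<in>F. scaleC (d f) f)"
  have "cinner g (x - p) = 0" if "g \<in> F" for g
    using cinner_onb_sum[OF assms, of g "\<lambda>f. cinner f x"] that assms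
    by (auto simp: p_def cinner_diff_right)
  then have "cinner (\<Sum>f\<in>F. scaleC (cinner f x - d f) f) (x - p) = 0"
    by (simp add: cinner_sum_left cinner_scaleC_left)
  moreover have "p - y = (\<Sum>f\<in>F. scaleC (cinner f x - d f) f)"
    unfolding p_def y_def by (simp add: sum_subtractf[symmetric] scaleC_diff_left)
  ultimately have "cinner (x - p) (p - y) = 0"
    by (metis cinner_commute complex_cnj_zero)
  then have "(norm (x - y))\<^sup>2 = (norm (x - p))\<^sup>2 + (norm (p - y))\<^sup>2"
    using norm_add_sq[of "x - p" "p - y"] by simp
  then have "(norm (x - p))\<^sup>2 \<le> (norm (x - y))\<^sup>2" by simp
  then show ?thesis
    unfolding p_def y_def by (simp add: power2_le_iff_abs_le)
qed

lemma has_sum_onb_expansion: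
  fixes E :: "'a::complex_inner set"
  assumes "onb E"
  shows "((\<lambda>e. scaleC (cinner e x) e) has_sum x) E"
  unfolding has_sum_def tendsto_iff
proof (intro allI impI)
  fix \<epsilon> :: real
  assume "\<epsilon> > 0"
  have "x \<in> closure (cspan E)" using assms unfolding onb_def by auto
  then obtain y where "y \<in> cspan E" "dist y x < \<epsilon>"
    using \<open>\<epsilon> > 0\<close> unfolding closure_approachable by blast
  then obtain G c where G: "finite G" "G \<subseteq> E" "y = (\<Sum>e\<in>G. scaleC (c e) e)"
    and yx: "dist y x < \<epsilon>"
    unfolding cspan_def by blast
  show "eventually (\<lambda>F. dist (sum (\<lambda>e. scaleC (cinner e x) e) F) x < \<epsilon>) (finite_subsets_at_top E)"
    unfolding eventually_finite_subsets_at_top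
  proof (intro exI[of _ G] conjI allI impI)
    fix F assume F: "finite F \<and> G \<subseteq> F \<and> F \<subseteq> E"
    have "y = (\<Sum>e\<in>F. scaleC (if e \<in> G then c e else 0) e)"
      unfolding G(3) using F by (intro sum.mono_neutral_cong_left) auto
    then have "norm (x - (\<Sum>e\<in>F. scaleC (cinner e x) e)) \<le> norm (x - y)"
      using onb_partial_sum_best_approx[OF assms, of F x] F by auto
    then show "dist (sum (\<lambda>e. scaleC (cinner e x) e) F) x < \<epsilon>"
      using yx by (simp add: dist_norm norm_minus_commute)
  qed (use G in auto)
qed

lemma has_sum_parseval_cinner:
  fixes E :: "'a::complex_inner set"
  assumes "onb E"
  shows "((\<lambda>f. cinner u f * cinner f v) has_sum cinner u v) E"
  using has_sum_bounded_linear[OF bounded_linear_cinner_right has_sum_onb_expansion[OF assms],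
      of u v]
  by (simp add: cinner_scaleC_right mult.commute)

lemma has_sum_parseval:
  fixes E :: "'a::complex_inner set"
  assumes "onb E"
  shows "((\<lambda>f. (cmod (cinner f v))\<^sup>2) has_sum (norm v)\<^sup>2) E"
proof -
  have "((\<lambda>f. Re (cinner v f * cinner f v)) has_sum Re (cinner v v)) E"
    by (rule has_sum_Re[OF has_sum_parseval_cinner[OF assms]])
  moreover have "Re (cinner v f * cinner f v) = (cmod (cinner f v))\<^sup>2" for f
    by (subst cinner_commute[of v f]) (simp only: cnj_mult_self Re_complex_of_real)
  ultimately show ?thesis
    by (simp add: norm_sq_cinner)
qed

section \<open>Square-summable families\<close>

lemma summable_on_CauchyI:
  fixes f :: "'i \<Rightarrow> 'a::{real_normed_vector, complete_space}"
  assumes "\<And>\<epsilon>. \<epsilon> > 0 \<Longrightarrow>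
    \<exists>F0. finite F0 \<and> F0 \<subseteq> A \<and> (\<forall>G. finite G \<and> G \<subseteq> A - F0 \<longrightarrow> norm (sum f G) < \<epsilon>)"
  shows "f summable_on A"
proof -
  have "\<exists>P. eventually P (finite_subsets_at_top A) \<and>
      (\<forall>F F'. P F \<and> P F' \<longrightarrow> dist (sum f F) (sum f F') < \<epsilon>)" if "\<epsilon> > 0" for \<epsilon>
  proof -
    have "\<epsilon> / 2 > 0" using that by simp
    from assms[OF this] obtain F0 where F0: "finite F0" "F0 \<subseteq> A"
      and tail: "\<forall>G. finite G \<and> G \<subseteq> A - F0 \<longrightarrow> norm (sum f G) < \<epsilon> / 2"
      by blast
    define P where "P F \<longleftrightarrow> finite F \<and> F0 \<subseteq> F \<and> F \<subseteq> A" for F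
    have ev: "eventually P (finite_subsets_at_top A)"
      unfolding P_def eventually_finite_subsets_at_top using F0 by blast
    have split: "sum f F = sum f (F - F0) + sum f F0" if "P F" for F
      using that unfolding P_def by (intro sum.subset_diff) auto
    have small: "norm (sum f (F - F0)) < \<epsilon> / 2" if "P F" for F
      using that unfolding P_def by (intro tail[rule_format]) auto
    have "dist (sum f F) (sum f F') < \<epsilon>" if "P F" "P F'" for F F'
    proof -
      have "dist (sum f F) (sum f F') = norm (sum f (F - F0) - sum f (F' - F0))"
        unfolding split[OF that(1)] split[OF that(2)] dist_norm by simp
      also have "\<dots> \<le> norm (sum f (F - F0)) + norm (sum f (F' - F0))"
        by (rule norm_triangle_ineq4)
      also have "\<dots> < \<epsilon> / 2 + \<epsilon> / 2"
        using small[OF that(1)] small[OF that(2)] by (rule add_strict_mono)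
      finally show ?thesis by simp
    qed
    with ev show ?thesis by blast
  qed
  then have "cauchy_filter (filtermap (sum f) (finite_subsets_at_top A))"
    by (simp add: cauchy_filter_metric_filtermap)
  then have "convergent_filter (filtermap (sum f) (finite_subsets_at_top A))"
    by (rule cauchy_filter_convergent)
  then obtain L where "(sum f \<longlongrightarrow> L) (finite_subsets_at_top A)"
    by (auto simp: convergent_filter_iff filterlim_def)
  then show ?thesis
    unfolding summable_on_def has_sum_def by blast
qed

lemma summable_on_nonneg_tail_small:
  fixes g :: "'i \<Rightarrow> real"
  assumes "g summable_on A" and "\<And>x. x \<in> A \<Longrightarrow> 0 \<le> g x" and "\<epsilon> > 0"
  shows "\<exists>F0. finite F0 \<and> F0 \<subseteq> A \<and> (\<forall>G. finite G \<and> G \<subseteq> A - F0 \<longrightarrow> sum g G < \<epsilon>)"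
proof -
  obtain F0 where F0: "finite F0" "F0 \<subseteq> A" "dist (sum g F0) (infsum g A) \<le> \<epsilon> / 2"
    using infsum_finite_approximation[OF assms(1), of "\<epsilon> / 2"] assms(3) by auto
  have "sum g G < \<epsilon>" if "finite G" "G \<subseteq> A - F0" for G
  proof -
    have "sum g F0 + sum g G = sum g (F0 \<union> G)"
      using that F0 by (subst sum.union_disjoint) auto
    also have "\<dots> \<le> infsum g A"
      using that F0 assms by (intro finite_sum_le_infsum) auto
    finally show ?thesis
      using F0(3) assms(3) abs_ge_minus_self[of "sum g F0 - infsum g A"]
      by (simp add: dist_real_def)
  qed
  then show ?thesis using F0 by blast
qed

lemma summable_on_norm_mult:
  fixes u :: "'i \<Rightarrow> 'a::real_normed_vector" and v :: "'i \<Rightarrow> 'b::real_normed_vector"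
  assumes "(\<lambda>i. (norm (u i))\<^sup>2) summable_on A" and "(\<lambda>i. (norm (v i))\<^sup>2) summable_on A"
  shows "(\<lambda>i. norm (u i) * norm (v i)) summable_on A"
proof (rule summable_on_comparison_test)
  show "(\<lambda>i. ((norm (u i))\<^sup>2 + (norm (v i))\<^sup>2) / 2) summable_on A"
    using summable_on_cmult_left[OF summable_on_add[OF assms], of "1/2"] by simp
  show "norm (u i) * norm (v i) \<le> ((norm (u i))\<^sup>2 + (norm (v i))\<^sup>2) / 2" for i
    using sum_squares_bound[of "norm (u i)" "norm (v i)"] by simp
qed simp

lemma summable_on_cinner:
  fixes u v :: "'i \<Rightarrow> 'a::complex_inner"
  assumes "(\<lambda>e. (norm (u e))\<^sup>2) summable_on E" and "(\<lambda>e. (norm (v e))\<^sup>2) summable_on E"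
  shows "(\<lambda>e. cinner (u e) (v e)) summable_on E"
proof -
  have "(\<lambda>e. norm (cinner (u e) (v e))) summable_on E"
  proof (rule Infinite_Sum.abs_summable_on_comparison_test'[OF summable_on_norm_mult[OF assms]])
    show "norm (cinner (u e) (v e)) \<le> norm (u e) * norm (v e)" for e
      by (rule norm_cinner_le)
  qed
  then show ?thesis
    by (rule abs_summable_summable)
qed

lemma summable_on_scaleC_onb:
  fixes E :: "'a::chilbert_space set"
  assumes E: "onb E" and sq: "(\<lambda>e. (cmod (c e))\<^sup>2) summable_on E"
  shows "(\<lambda>e. scaleC (c e) e) summable_on E"
proof (rule summable_on_CauchyI)
  fix \<epsilon> :: real
  assume "\<epsilon> > 0"
  then have "\<exists>F0. finite F0 \<and> F0 \<subseteq> E \<and>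
      (\<forall>G. finite G \<and> G \<subseteq> E - F0 \<longrightarrow> (\<Sum>e\<in>G. (cmod (c e))\<^sup>2) < \<epsilon>\<^sup>2)"
    by (intro summable_on_nonneg_tail_small[OF sq]) simp_all
  then obtain F0 where F0: "finite F0" "F0 \<subseteq> E"
    and tail: "\<forall>G. finite G \<and> G \<subseteq> E - F0 \<longrightarrow> (\<Sum>e\<in>G. (cmod (c e))\<^sup>2) < \<epsilon>\<^sup>2"
    by blast
  have "norm (\<Sum>e\<in>G. scaleC (c e) e) < \<epsilon>" if "finite G" "G \<subseteq> E - F0" for G
  proof -
    have "G \<subseteq> E" using that by blast
    then have "(norm (\<Sum>e\<in>G. scaleC (c e) e))\<^sup>2 < \<epsilon>\<^sup>2"
      using norm_sq_onb_sum[OF E, of G c] tail that by simp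
    from power2_less_imp_less[OF this] show ?thesis
      using \<open>\<epsilon> > 0\<close> by simp
  qed
  then show "\<exists>F0. finite F0 \<and> F0 \<subseteq> E \<and>
      (\<forall>G. finite G \<and> G \<subseteq> E - F0 \<longrightarrow> norm (\<Sum>e\<in>G. scaleC (c e) e) < \<epsilon>)"
    using F0 by blast
qed

section \<open>Bounded operators and adjoints\<close>

lemma bounded_clinear_op_imp_bounded_linear:
  assumes "bounded_clinear_op T"
  shows "bounded_linear T"
proof -
  from assms obtain K where add: "\<And>x y. T (x + y) = T x + T y"
    and sc: "\<And>c x. T (scaleC c x) = scaleC c (T x)" and K: "\<And>x. norm (T x) \<le> norm x * K"
    unfolding bounded_clinear_op_def by blast
  show ?thesis
  proof (rule bounded_linear_intro[where K=K])
    show "T (scaleR r x) = scaleR r (T x)" for r x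
      using sc[of "complex_of_real r" x] by (simp add: scaleC_of_real)
  qed (use add K in auto)
qed

lemma bounded_clinear_op_lincomb:
  assumes "bounded_clinear_op B" and "bounded_clinear_op C"
  shows "bounded_clinear_op (\<lambda>x. scaleC a (B x) + scaleC b (C x))"
proof -
  from assms obtain K L where
    B: "\<And>x y. B (x + y) = B x + B y" "\<And>c x. B (scaleC c x) = scaleC c (B x)"
      "\<And>x. norm (B x) \<le> norm x * K" and
    C: "\<And>x y. C (x + y) = C x + C y" "\<And>c x. C (scaleC c x) = scaleC c (C x)"
      "\<And>x. norm (C x) \<le> norm x * L"
    unfolding bounded_clinear_op_def by blast
  have "norm (scaleC a (B x) + scaleC b (C x)) \<le> norm x * (cmod a * K + cmod b * L)" for x
  proof -
    have "norm (scaleC a (B x) + scaleC b (C x)) \<le> cmod a * norm (B x) + cmod b * norm (C x)"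
      using norm_triangle_ineq[of "scaleC a (B x)" "scaleC b (C x)"] by (simp add: norm_scaleC)
    also have "\<dots> \<le> cmod a * (norm x * K) + cmod b * (norm x * L)"
      by (intro add_mono mult_left_mono B(3) C(3)) simp_all
    finally show ?thesis by (simp add: algebra_simps)
  qed
  moreover have "scaleC a (B (x + y)) + scaleC b (C (x + y))
      = (scaleC a (B x) + scaleC b (C x)) + (scaleC a (B y) + scaleC b (C y))" for x y
    by (simp add: B C scaleC_add_right add_ac)
  moreover have "scaleC a (B (scaleC c x)) + scaleC b (C (scaleC c x))
      = scaleC c (scaleC a (B x) + scaleC b (C x))" for c x
    by (simp add: B C scaleC_add_right scaleC_scaleC mult.commute)
  ultimately show ?thesis
    unfolding bounded_clinear_op_def by blast
qed

definition is_adjoint :: "('a::complex_inner \<Rightarrow> 'a) \<Rightarrow> ('a \<Rightarrow> 'a) \<Rightarrow> bool" where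
  "is_adjoint T S \<longleftrightarrow> (\<forall>x y. cinner (T x) y = cinner x (S y))"

lemma adj_eqI:
  assumes "is_adjoint T S"
  shows "adj T = S"
proof
  fix y
  have "\<exists>S. \<forall>x y. cinner (T x) y = cinner x (S y)"
    using assms unfolding is_adjoint_def by blast
  then have "\<forall>x y. cinner (T x) y = cinner x (adj T y)"
    unfolding adj_def by (rule someI_ex)
  with assms show "adj T y = S y"
    unfolding is_adjoint_def by (intro cinner_ext) simp
qed

lemma is_adjoint_sym:
  assumes "is_adjoint T S"
  shows "is_adjoint S T"
  using assms unfolding is_adjoint_def by (metis cinner_commute)

lemma bounded_clinear_op_adjoint:
  assumes T: "bounded_clinear_op T" and adj: "is_adjoint T S"
  shows "bounded_clinear_op S"
proof -
  obtain K where K: "\<And>x. norm (T x) \<le> norm x * K"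
    using T unfolding bounded_clinear_op_def by blast
  have S: "cinner x (S y) = cinner (T x) y" for x y
    using adj unfolding is_adjoint_def by simp
  have "norm (S y) \<le> norm y * max K 0" for y
  proof (cases "S y = 0")
    case False
    have "(norm (S y))\<^sup>2 = Re (cinner (T (S y)) y)"
      by (simp add: norm_sq_cinner S)
    also have "\<dots> \<le> norm (T (S y)) * norm y"
      using complex_Re_le_cmod norm_cinner_le order_trans by blast
    also have "\<dots> \<le> norm (S y) * max K 0 * norm y"
      using K[of "S y"] mult_left_mono[of K "max K 0" "norm (S y)"]
      by (intro mult_right_mono) auto
    finally show ?thesis
      using False by (simp add: power2_eq_square mult_ac)
  qed simp
  moreover have "S (x + y) = S x + S y" for x y
    by (rule cinner_ext) (simp add: S cinner_add_right)
  moreover have "S (scaleC c x) = scaleC c (S x)" for c x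
    by (rule cinner_ext) (simp add: S cinner_scaleC_right)
  ultimately show ?thesis
    unfolding bounded_clinear_op_def by blast
qed

text \<open>The candidate adjoint \<open>y \<mapsto> \<Sum>\<^sub>e \<langle>Be, y\<rangle> e\<close> converges by Riesz--Fischer because
  \<open>|\<langle>Be, y\<rangle>| \<le> \<parallel>Be\<parallel> \<parallel>y\<parallel>\<close>.\<close>

lemma hilbert_schmidt_adjoint_exists:
  fixes B :: "'a::chilbert_space \<Rightarrow> 'a"
  assumes B: "bounded_clinear_op B" and E: "onb E"
    and sq: "(\<lambda>e. (norm (B e))\<^sup>2) summable_on E"
  shows "\<exists>S. is_adjoint B S"
proof -
  have sc: "B (scaleC c x) = scaleC c (B x)" for c x
    using B unfolding bounded_clinear_op_def by blast
  define S where "S y = infsum (\<lambda>e. scaleC (cinner (B e) y) e) E" for y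
  have "cinner (B x) y = cinner x (S y)" for x y
  proof -
    have "(\<lambda>e. (cmod (cinner (B e) y))\<^sup>2) summable_on E"
    proof (rule summable_on_comparison_test)
      show "(\<lambda>e. (norm (B e))\<^sup>2 * (norm y)\<^sup>2) summable_on E"
        using summable_on_cmult_left[OF sq] by simp
      show "(cmod (cinner (B e) y))\<^sup>2 \<le> (norm (B e))\<^sup>2 * (norm y)\<^sup>2" for e
        using norm_cinner_le[of "B e" y] by (simp add: power_mult_distrib[symmetric] power_mono)
    qed simp
    then have "((\<lambda>e. scaleC (cinner (B e) y) e) has_sum S y) E"
      unfolding S_def using summable_on_scaleC_onb[OF E] by simp
    from has_sum_bounded_linear[OF bounded_linear_cinner_right this, of x]
    have 1: "((\<lambda>e. cinner (B e) y * cinner x e) has_sum cinner x (S y)) E"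
      by (simp add: cinner_scaleC_right)
    have "((\<lambda>e. B (scaleC (cinner e x) e)) has_sum B x) E"
      by (rule has_sum_bounded_linear[OF bounded_clinear_op_imp_bounded_linear[OF B]
            has_sum_onb_expansion[OF E]])
    from has_sum_bounded_linear[OF bounded_linear_cinner_left this[unfolded sc], of y]
    have 2: "((\<lambda>e. cinner (B e) y * cinner x e) has_sum cinner (B x) y) E"
      by (simp add: cinner_scaleC_left mult.commute flip: cinner_commute)
    show ?thesis
      using has_sum_unique[OF 2 1] .
  qed
  then show ?thesis
    unfolding is_adjoint_def by blast
qed

section \<open>Hilbert--Schmidt operators\<close>

lemma has_sum_Sigma_cinner_sq:
  fixes F :: "'a::complex_inner set"
  assumes "onb F" and "(\<lambda>e. (norm (u e))\<^sup>2) summable_on E"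
  shows "((\<lambda>(e, f). (cmod (cinner f (u e)))\<^sup>2) has_sum infsum (\<lambda>e. (norm (u e))\<^sup>2) E) (E \<times> F)"
proof -
  let ?g = "\<lambda>(e, f). (cmod (cinner f (u e)))\<^sup>2"
  have row: "((\<lambda>f. ?g (e, f)) has_sum (norm (u e))\<^sup>2) F" for e
    using has_sum_parseval[OF assms(1), of "u e"] by simp
  have "?g summable_on E \<times> F"
    by (rule summable_on_SigmaI[OF row assms(2)]) auto
  then have "?g summable_on E \<times> F" "(?g has_sum infsum ?g (E \<times> F)) (E \<times> F)"
    by simp_all
  moreover have "((\<lambda>e. (norm (u e))\<^sup>2) has_sum infsum ?g (E \<times> F)) E"
    by (rule has_sum_SigmaD[OF _ row]) (use calculation in simp)
  ultimately show ?thesis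
    by (metis infsumI)
qed

lemma has_sum_norm_sq_adjoint:
  fixes E F :: "'a::complex_inner set"
  assumes E: "onb E" and F: "onb F" and adj: "is_adjoint X X'"
    and sq: "(\<lambda>e. (norm (X e))\<^sup>2) summable_on E"
  shows "((\<lambda>f. (norm (X' f))\<^sup>2) has_sum infsum (\<lambda>e. (norm (X e))\<^sup>2) E) F"
proof -
  have "cmod (cinner f (X e)) = cmod (cinner e (X' f))" for e f
    by (subst cinner_commute) (simp add: adj[unfolded is_adjoint_def])
  then have "((\<lambda>(f, e). (cmod (cinner e (X' f)))\<^sup>2) has_sum infsum (\<lambda>e. (norm (X e))\<^sup>2) E) (F \<times> E)"
    using has_sum_Sigma_cinner_sq[OF F sq] by (subst (asm) has_sum_swap) simp
  then show ?thesis
    by (rule has_sum_SigmaD) (use has_sum_parseval[OF E] in simp)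
qed

lemma summable_on_Sigma_cinner_mult:
  fixes F :: "'a::complex_inner set"
  assumes F: "onb F"
    and sqX: "(\<lambda>e. (norm (X e))\<^sup>2) summable_on E"
    and sqY: "(\<lambda>e. (norm (Y e))\<^sup>2) summable_on E"
  shows "(\<lambda>(e, f). cinner (X e) f * cinner f (Y e)) summable_on E \<times> F"
proof -
  have norm_eq: "norm (cinner (X e) f * cinner f (Y e)) = cmod (cinner f (X e)) * cmod (cinner f (Y e))"
    for e f
    unfolding norm_mult cinner_commute[of "X e" f] complex_mod_cnj ..
  have "(\<lambda>(e, f). cmod (cinner f (X e)) * cmod (cinner f (Y e))) summable_on E \<times> F"
    using summable_on_norm_mult[of "\<lambda>(e, f). cinner f (X e)" "E \<times> F" "\<lambda>(e, f). cinner f (Y e)"]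
      has_sum_imp_summable[OF has_sum_Sigma_cinner_sq[OF F sqX]]
      has_sum_imp_summable[OF has_sum_Sigma_cinner_sq[OF F sqY]]
    unfolding case_prod_unfold by simp
  then have "(\<lambda>p. norm ((\<lambda>(e, f). cinner (X e) f * cinner f (Y e)) p)) summable_on E \<times> F"
  proof (rule Infinite_Sum.abs_summable_on_comparison_test')
    show "norm ((\<lambda>(e, f). cinner (X e) f * cinner f (Y e)) p)
        \<le> (\<lambda>(e, f). cmod (cinner f (X e)) * cmod (cinner f (Y e))) p" for p
      by (cases p) (simp only: norm_eq prod.case order_refl)
  qed
  then show ?thesis
    by (rule abs_summable_summable)
qed

lemma infsum_cinner_adjoint_swap:
  fixes E F :: "'a::complex_inner set"
  assumes E: "onb E" and F: "onb F" and adjX: "is_adjoint X X'" and adjY: "is_adjoint Y Y'"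
    and sqX: "(\<lambda>e. (norm (X e))\<^sup>2) summable_on E"
    and sqY: "(\<lambda>e. (norm (Y e))\<^sup>2) summable_on E"
  shows "infsum (\<lambda>e. cinner (X e) (Y e)) E = infsum (\<lambda>f. cinner (Y' f) (X' f)) F"
proof -
  define h where "h e f = cinner (X e) f * cinner f (Y e)" for e f
  have "infsum (\<lambda>e. infsum (h e) F) E = infsum (\<lambda>f. infsum (\<lambda>e. h e f) E) F"
    using summable_on_Sigma_cinner_mult[OF F sqX sqY] unfolding h_def
    by (rule infsum_swap_banach)
  moreover have "infsum (h e) F = cinner (X e) (Y e)" for e
    unfolding h_def by (rule infsumI[OF has_sum_parseval_cinner[OF F]])
  moreover have "infsum (\<lambda>e. h e f) E = cinner (Y' f) (X' f)" for f
  proof -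
    have "h e f = cinner (Y' f) e * cinner e (X' f)" for e
      using adjX is_adjoint_sym[OF adjY] unfolding h_def is_adjoint_def by (simp add: mult.commute)
    then show ?thesis
      by (simp add: infsumI[OF has_sum_parseval_cinner[OF E]])
  qed
  ultimately show ?thesis
    by simp
qed

lemma has_sum_norm_sq_lincomb:
  fixes X Y :: "'i \<Rightarrow> 'a::complex_inner"
  assumes sqX: "(\<lambda>e. (norm (X e))\<^sup>2) summable_on E" and sqY: "(\<lambda>e. (norm (Y e))\<^sup>2) summable_on E"
  shows "((\<lambda>e. (norm (scaleC a (X e) + scaleC b (Y e)))\<^sup>2) has_sum
     ((cmod a)\<^sup>2 * infsum (\<lambda>e. (norm (X e))\<^sup>2) E + (cmod b)\<^sup>2 * infsum (\<lambda>e. (norm (Y e))\<^sup>2) E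
      + 2 * Re (cnj a * b * infsum (\<lambda>e. cinner (X e) (Y e)) E))) E"
proof -
  have pointwise: "(norm (scaleC a (X e) + scaleC b (Y e)))\<^sup>2 = (cmod a)\<^sup>2 * (norm (X e))\<^sup>2
      + (cmod b)\<^sup>2 * (norm (Y e))\<^sup>2 + 2 * Re (cnj a * b * cinner (X e) (Y e))" for e
    by (simp add: norm_add_sq norm_scaleC cinner_scaleC_left cinner_scaleC_right
        power_mult_distrib mult.assoc) (simp add: algebra_simps)
  have "((\<lambda>e. (cmod a)\<^sup>2 * (norm (X e))\<^sup>2) has_sum
      (cmod a)\<^sup>2 * infsum (\<lambda>e. (norm (X e))\<^sup>2) E) E"
    using sqX by (intro has_sum_cmult_right has_sum_infsum)
  moreover have "((\<lambda>e. (cmod b)\<^sup>2 * (norm (Y e))\<^sup>2) has_sum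
      (cmod b)\<^sup>2 * infsum (\<lambda>e. (norm (Y e))\<^sup>2) E) E"
    using sqY by (intro has_sum_cmult_right has_sum_infsum)
  moreover have "((\<lambda>e. 2 * Re (cnj a * b * cinner (X e) (Y e))) has_sum
      2 * Re (cnj a * b * infsum (\<lambda>e. cinner (X e) (Y e)) E)) E"
    using summable_on_cinner[OF sqX sqY]
    by (intro has_sum_cmult_right has_sum_Re has_sum_infsum)
  ultimately show ?thesis
    unfolding pointwise by (intro has_sum_add)
qed

abbreviation trace_onb :: "'a::complex_inner set" where
  "trace_onb \<equiv> SOME E. onb E"

lemma onb_trace_onb:
  fixes T :: "'a::complex_inner \<Rightarrow> 'a"
  assumes "hilbert_schmidt T"
  shows "onb (trace_onb :: 'a set)"
  using assms unfolding hilbert_schmidt_def by (metis someI)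

lemma hilbert_schmidt_is_adjoint:
  fixes T :: "'a::chilbert_space \<Rightarrow> 'a"
  assumes "hilbert_schmidt T"
  shows "is_adjoint T (adj T)"
proof -
  obtain E where "bounded_clinear_op T" "onb E" "(\<lambda>e. (norm (T e))\<^sup>2) summable_on E"
    using assms unfolding hilbert_schmidt_def by blast
  then obtain S where "is_adjoint T S"
    using hilbert_schmidt_adjoint_exists by blast
  then show ?thesis
    by (simp add: adj_eqI)
qed

lemma adj_adj:
  fixes T :: "'a::chilbert_space \<Rightarrow> 'a"
  assumes "hilbert_schmidt T"
  shows "adj (adj T) = T"
  by (rule adj_eqI[OF is_adjoint_sym[OF hilbert_schmidt_is_adjoint[OF assms]]])

text \<open>The Hilbert--Schmidt sum does not depend on the basis: passing to the adjoint
  exchanges the order of summation in \<open>\<Sum>\<^sub>e \<Sum>\<^sub>f |\<langle>f, Te\<rangle>|\<^sup>2\<close>, and doing it twice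
  connects any two bases.\<close>

lemma hilbert_schmidt_has_sum_onb:
  fixes T :: "'a::chilbert_space \<Rightarrow> 'a"
  assumes "hilbert_schmidt T" and "onb E" and "onb F"
  shows "((\<lambda>e. (norm (T e))\<^sup>2) has_sum infsum (\<lambda>e. (norm (T e))\<^sup>2) E) F"
proof -
  obtain E0 where E0: "onb E0" and sq0: "(\<lambda>e. (norm (T e))\<^sup>2) summable_on E0"
    using assms(1) unfolding hilbert_schmidt_def by blast
  have adj: "is_adjoint T (adj T)"
    by (rule hilbert_schmidt_is_adjoint[OF assms(1)])
  define N where "N = infsum (\<lambda>e. (norm (T e))\<^sup>2) E0"
  have any: "((\<lambda>f. (norm (T f))\<^sup>2) has_sum N) G" if G: "onb G" for G
  proof -
    have "((\<lambda>g. (norm (adj T g))\<^sup>2) has_sum N) G"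
      unfolding N_def by (rule has_sum_norm_sq_adjoint[OF E0 G adj sq0])
    with has_sum_norm_sq_adjoint[OF G G is_adjoint_sym[OF adj] has_sum_imp_summable[OF this]]
    show ?thesis
      by (simp add: infsumI)
  qed
  show ?thesis
    using any[OF assms(3)] infsumI[OF any[OF assms(2)]] by simp
qed

lemma hs_norm_eq_sqrt_infsum:
  fixes T :: "'a::chilbert_space \<Rightarrow> 'a"
  assumes "hilbert_schmidt T" and "onb E"
  shows "hs_norm T = sqrt (infsum (\<lambda>e. (norm (T e))\<^sup>2) E)"
proof -
  have E0: "onb (trace_onb :: 'a set)"
    by (rule onb_trace_onb[OF assms(1)])
  have "cinner e (adj T (T e)) = cinner (T e) (T e)" for e
    using hilbert_schmidt_is_adjoint[OF assms(1)] unfolding is_adjoint_def by simp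
  then have "cinner e (adj T (T e)) = complex_of_real ((norm (T e))\<^sup>2)" for e
    by (simp add: cinner_self_norm)
  then have "trace (adj T \<circ> T) = infsum (\<lambda>e. complex_of_real ((norm (T e))\<^sup>2)) trace_onb"
    unfolding trace_def comp_def by simp
  also have "\<dots> = complex_of_real (infsum (\<lambda>e. (norm (T e))\<^sup>2) E)"
    by (rule infsumI[OF has_sum_of_real[OF hilbert_schmidt_has_sum_onb[OF assms E0]]])
  finally show ?thesis
    unfolding hs_norm_def by simp
qed

lemma hs_norm_nonneg:
  fixes T :: "'a::chilbert_space \<Rightarrow> 'a"
  assumes "hilbert_schmidt T"
  shows "0 \<le> hs_norm T"
  using hs_norm_eq_sqrt_infsum[OF assms onb_trace_onb[OF assms]] by (simp add: infsum_nonneg)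

lemma hilbert_schmidt_has_sum_norm_sq:
  fixes T :: "'a::chilbert_space \<Rightarrow> 'a"
  assumes "hilbert_schmidt T" and "onb E"
  shows "((\<lambda>e. (norm (T e))\<^sup>2) has_sum (hs_norm T)\<^sup>2) E"
proof -
  have "0 \<le> infsum (\<lambda>e. (norm (T e))\<^sup>2) E"
    by (simp add: infsum_nonneg)
  then show ?thesis
    using hilbert_schmidt_has_sum_onb[OF assms assms(2)] hs_norm_eq_sqrt_infsum[OF assms] by simp
qed

lemma hilbert_schmidt_adj:
  fixes T :: "'a::chilbert_space \<Rightarrow> 'a"
  assumes "hilbert_schmidt T"
  shows "hilbert_schmidt (adj T)"
proof -
  obtain E where T: "bounded_clinear_op T" and E: "onb E"
    and sq: "(\<lambda>e. (norm (T e))\<^sup>2) summable_on E"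
    using assms unfolding hilbert_schmidt_def by blast
  have adj: "is_adjoint T (adj T)"
    by (rule hilbert_schmidt_is_adjoint[OF assms])
  show ?thesis
    unfolding hilbert_schmidt_def
    using bounded_clinear_op_adjoint[OF T adj] E
      has_sum_imp_summable[OF has_sum_norm_sq_adjoint[OF E E adj sq]]
    by blast
qed

lemma hs_norm_adj:
  fixes T :: "'a::chilbert_space \<Rightarrow> 'a"
  assumes "hilbert_schmidt T"
  shows "hs_norm (adj T) = hs_norm T"
proof -
  have E0: "onb (trace_onb :: 'a set)"
    by (rule onb_trace_onb[OF assms])
  have "((\<lambda>e. (norm (adj T e))\<^sup>2) has_sum infsum (\<lambda>e. (norm (T e))\<^sup>2) trace_onb) trace_onb"
    by (rule has_sum_norm_sq_adjoint[OF E0 E0 hilbert_schmidt_is_adjoint[OF assms]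
          has_sum_imp_summable[OF hilbert_schmidt_has_sum_norm_sq[OF assms E0]]])
  then show ?thesis
    using hs_norm_eq_sqrt_infsum[OF assms E0] hs_norm_eq_sqrt_infsum[OF hilbert_schmidt_adj[OF assms] E0]
    by (simp add: infsumI)
qed

lemma hilbert_schmidt_lincomb:
  fixes B C :: "'a::chilbert_space \<Rightarrow> 'a"
  assumes "hilbert_schmidt B" and "hilbert_schmidt C"
  shows "hilbert_schmidt (\<lambda>x. scaleC a (B x) + scaleC b (C x))"
proof -
  have E0: "onb (trace_onb :: 'a set)"
    by (rule onb_trace_onb[OF assms(1)])
  have "bounded_clinear_op B" "bounded_clinear_op C"
    using assms unfolding hilbert_schmidt_def by blast+
  then show ?thesis
    unfolding hilbert_schmidt_def
    using E0 has_sum_imp_summable[OF has_sum_norm_sq_lincomb[of B trace_onb C a b]]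
      has_sum_imp_summable[OF hilbert_schmidt_has_sum_norm_sq[OF assms(1) E0]]
      has_sum_imp_summable[OF hilbert_schmidt_has_sum_norm_sq[OF assms(2) E0]]
      bounded_clinear_op_lincomb
    by blast
qed

lemma ReOp_eq_lincomb: "ReOp S = (\<lambda>x. scaleC (1/2) (S x) + scaleC (1/2) (adj S x))"
  unfolding ReOp_def by (simp add: scaleC_add_right)

lemma hilbert_schmidt_ReOp:
  fixes S :: "'a::chilbert_space \<Rightarrow> 'a"
  assumes "hilbert_schmidt S"
  shows "hilbert_schmidt (ReOp S)"
  unfolding ReOp_eq_lincomb by (rule hilbert_schmidt_lincomb[OF assms hilbert_schmidt_adj[OF assms]])

lemma trace_adj_comp:
  fixes X :: "'a::chilbert_space \<Rightarrow> 'a"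
  assumes "hilbert_schmidt X"
  shows "trace (adj X \<circ> Y) = infsum (\<lambda>e. cinner (X e) (Y e)) trace_onb"
  using hilbert_schmidt_is_adjoint[OF assms]
  unfolding trace_def comp_def is_adjoint_def by simp

lemma has_sum_trace_comp:
  fixes X Y :: "'a::chilbert_space \<Rightarrow> 'a"
  assumes "hilbert_schmidt X" and "hilbert_schmidt Y"
  shows "((\<lambda>e. cinner e (X (Y e))) has_sum trace (X \<circ> Y)) trace_onb"
proof -
  have E0: "onb (trace_onb :: 'a set)"
    by (rule onb_trace_onb[OF assms(1)])
  have "(\<lambda>e. cinner (adj X e) (Y e)) summable_on trace_onb"
    by (rule summable_on_cinner[OF
          has_sum_imp_summable[OF hilbert_schmidt_has_sum_norm_sq[OF hilbert_schmidt_adj[OF assms(1)] E0]]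
          has_sum_imp_summable[OF hilbert_schmidt_has_sum_norm_sq[OF assms(2) E0]]])
  moreover have "cinner (adj X e) (Y e) = cinner e (X (Y e))" for e
    using is_adjoint_sym[OF hilbert_schmidt_is_adjoint[OF assms(1)]]
    unfolding is_adjoint_def by simp
  ultimately show ?thesis
    unfolding trace_def comp_def by simp
qed

lemma trace_comp_commute:
  fixes X Y :: "'a::chilbert_space \<Rightarrow> 'a"
  assumes X: "hilbert_schmidt X" and Y: "hilbert_schmidt Y"
  shows "trace (X \<circ> Y) = trace (Y \<circ> X)"
proof -
  have E0: "onb (trace_onb :: 'a set)"
    by (rule onb_trace_onb[OF X])
  have sq: "(\<lambda>e. (norm (T e))\<^sup>2) summable_on trace_onb" if "hilbert_schmidt T" for T :: "'a \<Rightarrow> 'a"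
    by (rule has_sum_imp_summable[OF hilbert_schmidt_has_sum_norm_sq[OF that E0]])
  have "trace (X \<circ> Y) = infsum (\<lambda>e. cinner (adj X e) (Y e)) trace_onb"
    using trace_adj_comp[OF hilbert_schmidt_adj[OF X], of Y] by (simp add: adj_adj[OF X])
  also have "\<dots> = infsum (\<lambda>e. cinner (adj Y e) (X e)) trace_onb"
    by (rule infsum_cinner_adjoint_swap[OF E0 E0
          is_adjoint_sym[OF hilbert_schmidt_is_adjoint[OF X]] hilbert_schmidt_is_adjoint[OF Y]
          sq[OF hilbert_schmidt_adj[OF X]] sq[OF Y]])
  also have "\<dots> = trace (Y \<circ> X)"
    using trace_adj_comp[OF hilbert_schmidt_adj[OF Y], of X] by (simp add: adj_adj[OF Y])
  finally show ?thesis .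
qed

lemma trace_comp_adj_right:
  fixes B C :: "'a::chilbert_space \<Rightarrow> 'a"
  assumes B: "hilbert_schmidt B" and C: "hilbert_schmidt C"
  shows "trace (B \<circ> adj C) = cnj (trace (adj B \<circ> C))"
proof -
  have "trace (B \<circ> adj C) = trace (adj C \<circ> B)"
    by (rule trace_comp_commute[OF B hilbert_schmidt_adj[OF C]])
  also have "\<dots> = infsum (\<lambda>e. cnj (cinner (B e) (C e))) trace_onb"
    unfolding trace_adj_comp[OF C] by (simp flip: cinner_commute)
  also have "\<dots> = cnj (trace (adj B \<circ> C))"
    unfolding trace_adj_comp[OF B] by simp
  finally show ?thesis .
qed

lemma hs_norm_lincomb_sq:
  fixes B C :: "'a::chilbert_space \<Rightarrow> 'a"
  assumes B: "hilbert_schmidt B" and C: "hilbert_schmidt C"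
  shows "(hs_norm (\<lambda>x. scaleC a (B x) + scaleC b (C x)))\<^sup>2
    = (cmod a)\<^sup>2 * (hs_norm B)\<^sup>2 + (cmod b)\<^sup>2 * (hs_norm C)\<^sup>2 + 2 * Re (cnj a * b * trace (adj B \<circ> C))"
proof -
  have E0: "onb (trace_onb :: 'a set)"
    by (rule onb_trace_onb[OF B])
  note hsB = hilbert_schmidt_has_sum_norm_sq[OF B E0]
  note hsC = hilbert_schmidt_has_sum_norm_sq[OF C E0]
  show ?thesis
    using has_sum_unique[OF hilbert_schmidt_has_sum_norm_sq[OF hilbert_schmidt_lincomb[OF B C] E0]
        has_sum_norm_sq_lincomb[OF has_sum_imp_summable[OF hsB] has_sum_imp_summable[OF hsC]]]
    unfolding infsumI[OF hsB] infsumI[OF hsC] trace_adj_comp[OF B] .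
qed

lemma hs_norm_ReOp_sq:
  fixes S :: "'a::chilbert_space \<Rightarrow> 'a"
  assumes S: "hilbert_schmidt S"
  shows "(hs_norm (ReOp S))\<^sup>2 = ((hs_norm S)\<^sup>2 + Re (trace (S \<circ> S))) / 2"
proof -
  have "cinner (S e) (adj S e) = cnj (cinner e (S (S e)))" for e
  proof -
    have "cinner (S e) (adj S e) = cinner (S (S e)) e"
      using hilbert_schmidt_is_adjoint[OF S] unfolding is_adjoint_def by simp
    then show ?thesis
      by (simp flip: cinner_commute)
  qed
  then have "trace (adj S \<circ> adj S) = cnj (trace (S \<circ> S))"
    unfolding trace_adj_comp[OF S] by (simp add: trace_def)
  then show ?thesis
    unfolding ReOp_eq_lincomb hs_norm_lincomb_sq[OF S hilbert_schmidt_adj[OF S]] hs_norm_adj[OF S]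
    by (simp add: power_divide)
qed

lemma trace_lincomb_sq:
  fixes B C :: "'a::chilbert_space \<Rightarrow> 'a" and a b :: complex
  assumes B: "hilbert_schmidt B" and C: "hilbert_schmidt C"
  defines "S \<equiv> \<lambda>x. scaleC a (B x) + scaleC b (C x)"
  shows "trace (S \<circ> S) = a * a * trace (B \<circ> B) + 2 * a * b * trace (B \<circ> C) + b * b * trace (C \<circ> C)"
proof -
  have lin: "T (scaleC a u + scaleC b v) = scaleC a (T u) + scaleC b (T v)"
    if "hilbert_schmidt T" for T :: "'a \<Rightarrow> 'a" and u v
    using that unfolding hilbert_schmidt_def bounded_clinear_op_def by simp
  have pointwise: "cinner e (S (S e)) = a * a * cinner e (B (B e)) + a * b * cinner e (B (C e))
      + (b * a * cinner e (C (B e)) + b * b * cinner e (C (C e)))" for e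
    unfolding S_def lin[OF B] lin[OF C]
    by (simp add: cinner_add_right cinner_scaleC_right scaleC_add_right algebra_simps)
  have "((\<lambda>e. cinner e (S (S e))) has_sum a * a * trace (B \<circ> B) + a * b * trace (B \<circ> C)
      + (b * a * trace (C \<circ> B) + b * b * trace (C \<circ> C))) trace_onb"
    unfolding pointwise
    by (intro has_sum_add has_sum_cmult_right has_sum_trace_comp B C)
  moreover have "trace (S \<circ> S) = infsum (\<lambda>e. cinner e (S (S e))) trace_onb"
    by (simp add: trace_def)
  ultimately have "trace (S \<circ> S) = a * a * trace (B \<circ> B) + a * b * trace (B \<circ> C)
      + (b * a * trace (C \<circ> B) + b * b * trace (C \<circ> C))"
    by (simp add: infsumI)
  then show ?thesis
    unfolding trace_comp_commute[OF C B] by (simp add: algebra_simps)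
qed

section \<open>The Euclidean operator radius\<close>

lemma weighted_sq_le_max:
  fixes x y \<alpha> \<beta> \<gamma> :: real
  assumes "0 \<le> x" "0 \<le> y" "x\<^sup>2 + y\<^sup>2 \<le> 1" "0 \<le> \<alpha>" "0 \<le> \<beta>" "0 \<le> \<gamma>"
  shows "x\<^sup>2 * \<alpha> + y\<^sup>2 * \<beta> + 2 * x * y * \<gamma> \<le> max \<alpha> \<beta> + \<gamma>"
proof -
  have "x\<^sup>2 * \<alpha> + y\<^sup>2 * \<beta> \<le> (x\<^sup>2 + y\<^sup>2) * max \<alpha> \<beta>"
    by (simp add: distrib_right add_mono mult_left_mono)
  also have "\<dots> \<le> max \<alpha> \<beta>"
    using assms by (simp add: mult_left_le_one_le)
  finally have "x\<^sup>2 * \<alpha> + y\<^sup>2 * \<beta> \<le> max \<alpha> \<beta>" .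
  moreover have "2 * x * y * \<gamma> \<le> \<gamma>"
    using sum_squares_bound[of x y] assms by (simp add: mult_left_le_one_le)
  ultimately show ?thesis by simp
qed

lemma hs_norm_ReOp_lincomb_sq_le:
  fixes B C :: "'a::chilbert_space \<Rightarrow> 'a"
  assumes B: "hilbert_schmidt B" and C: "hilbert_schmidt C"
    and ab: "(cmod a)\<^sup>2 + (cmod b)\<^sup>2 \<le> 1"
  shows "(hs_norm (ReOp (\<lambda>x. scaleC a (B x) + scaleC b (C x))))\<^sup>2
    \<le> 1/2 * (max (cmod (trace (B \<circ> B))) (cmod (trace (C \<circ> C))) + cmod (trace (B \<circ> C))
            + max ((hs_norm B)\<^sup>2) ((hs_norm C)\<^sup>2) + cmod (trace (B \<circ> adj C)))"
proof -
  define S where "S x = scaleC a (B x) + scaleC b (C x)" for x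
  have "Re (cnj a * b * trace (adj B \<circ> C)) \<le> cmod a * cmod b * cmod (trace (B \<circ> adj C))"
    using complex_Re_le_cmod[of "cnj a * b * trace (adj B \<circ> C)"]
    by (simp add: norm_mult trace_comp_adj_right[OF B C])
  then have "(hs_norm S)\<^sup>2 \<le> (cmod a)\<^sup>2 * (hs_norm B)\<^sup>2 + (cmod b)\<^sup>2 * (hs_norm C)\<^sup>2
      + 2 * cmod a * cmod b * cmod (trace (B \<circ> adj C))"
    unfolding S_def hs_norm_lincomb_sq[OF B C] by simp
  also have "\<dots> \<le> max ((hs_norm B)\<^sup>2) ((hs_norm C)\<^sup>2) + cmod (trace (B \<circ> adj C))"
    using ab by (intro weighted_sq_le_max) simp_all
  finally have norm_le: "(hs_norm S)\<^sup>2 \<le> max ((hs_norm B)\<^sup>2) ((hs_norm C)\<^sup>2) + cmod (trace (B \<circ> adj C))" .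
  have "Re (trace (S \<circ> S)) \<le> cmod (a * a * trace (B \<circ> B) + 2 * a * b * trace (B \<circ> C) + b * b * trace (C \<circ> C))"
    unfolding S_def trace_lincomb_sq[OF B C] by (rule complex_Re_le_cmod)
  also have "\<dots> \<le> cmod (a * a * trace (B \<circ> B)) + cmod (2 * a * b * trace (B \<circ> C))
      + cmod (b * b * trace (C \<circ> C))"
    by (rule order_trans[OF norm_triangle_ineq add_right_mono[OF norm_triangle_ineq]])
  also have "\<dots> = (cmod a)\<^sup>2 * cmod (trace (B \<circ> B)) + (cmod b)\<^sup>2 * cmod (trace (C \<circ> C))
      + 2 * cmod a * cmod b * cmod (trace (B \<circ> C))"
    by (simp add: norm_mult power2_eq_square)
  also have "\<dots> \<le> max (cmod (trace (B \<circ> B))) (cmod (trace (C \<circ> C))) + cmod (trace (B \<circ> C))"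
    using ab by (intro weighted_sq_le_max) simp_all
  finally have "Re (trace (S \<circ> S)) \<le> max (cmod (trace (B \<circ> B))) (cmod (trace (C \<circ> C))) + cmod (trace (B \<circ> C))" .
  with norm_le show ?thesis
    using hs_norm_ReOp_sq[OF hilbert_schmidt_lincomb[OF B C]] unfolding S_def by simp
qed

lemma cSup_power2_le:
  fixes A :: "real set"
  assumes "A \<noteq> {}" and "\<And>r. r \<in> A \<Longrightarrow> 0 \<le> r \<and> r\<^sup>2 \<le> K"
  shows "(Sup A)\<^sup>2 \<le> K"
proof -
  obtain r0 where r0: "r0 \<in> A" using assms(1) by blast
  have le: "r \<le> sqrt K" if "r \<in> A" for r
    using assms(2)[OF that] by (simp add: real_le_rsqrt)
  then have "Sup A \<le> sqrt K"
    by (rule cSup_least[OF assms(1)])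
  moreover have "0 \<le> Sup A"
    using assms(2)[OF r0] cSup_upper[OF r0 bdd_aboveI[OF le]] by linarith
  moreover have "0 \<le> K"
    using assms(2)[OF r0] by (meson order_trans zero_le_power2)
  ultimately show ?thesis
    using power_mono[of "Sup A" "sqrt K" 2] by simp
qed

lemma w2e_power2_le:
  fixes B C :: "'a::chilbert_space \<Rightarrow> 'a"
  assumes B: "hilbert_schmidt B" and C: "hilbert_schmidt C"
    and bound: "\<And>a b. (cmod a)\<^sup>2 + (cmod b)\<^sup>2 \<le> 1 \<Longrightarrow>
      (hs_norm (ReOp (\<lambda>x. scaleC a (B x) + scaleC b (C x))))\<^sup>2 \<le> K"
  shows "(w2e B C)\<^sup>2 \<le> K"
proof -
  define W where "W = {hs_norm (ReOp (\<lambda>x. scaleC (exp (\<i> * complex_of_real \<theta>))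
      (scaleC l1 (B x) + scaleC l2 (C x)))) | l1 l2 \<theta>. (cmod l1)\<^sup>2 + (cmod l2)\<^sup>2 \<le> 1}"
  have "(Sup W)\<^sup>2 \<le> K"
  proof (rule cSup_power2_le)
    have "hs_norm (ReOp (\<lambda>x. scaleC (exp (\<i> * complex_of_real 0)) (scaleC 0 (B x) + scaleC 0 (C x))))
        \<in> W"
      unfolding W_def by (intro CollectI exI[of _ 0]) simp
    then show "W \<noteq> {}" by blast
  next
    fix r
    assume "r \<in> W"
    then obtain l1 l2 \<theta> where l: "(cmod l1)\<^sup>2 + (cmod l2)\<^sup>2 \<le> 1" and r: "r = hs_norm (ReOp
        (\<lambda>x. scaleC (exp (\<i> * complex_of_real \<theta>)) (scaleC l1 (B x) + scaleC l2 (C x))))"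
      unfolding W_def by blast
    define u where "u = exp (\<i> * complex_of_real \<theta>)"
    have "cmod u = 1"
      unfolding u_def by (simp add: norm_exp_eq_Re)
    then have ab: "(cmod (u * l1))\<^sup>2 + (cmod (u * l2))\<^sup>2 \<le> 1"
      using l by (simp add: norm_mult)
    have r: "r = hs_norm (ReOp (\<lambda>x. scaleC (u * l1) (B x) + scaleC (u * l2) (C x)))"
      unfolding r u_def by (simp add: scaleC_add_right scaleC_scaleC)
    show "0 \<le> r \<and> r\<^sup>2 \<le> K"
      unfolding r using hs_norm_nonneg[OF hilbert_schmidt_ReOp[OF hilbert_schmidt_lincomb[OF B C]]]
        bound[OF ab] by blast
  qed
  then show ?thesis
    unfolding w2e_def W_def .
qed

theorem theorem3p4:
  fixes B C :: "'a::chilbert_space \<Rightarrow> 'a"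
  assumes "hilbert_schmidt B" and "hilbert_schmidt C"
  shows "(w2e B C)\<^sup>2 \<le> 1/2 * (max (cmod (trace (B \<circ> B))) (cmod (trace (C \<circ> C)))
            + cmod (trace (B \<circ> C))
            + max ((hs_norm B)\<^sup>2) ((hs_norm C)\<^sup>2)
            + cmod (trace (B \<circ> adj C)))"
  by (rule w2e_power2_le[OF assms hs_norm_ReOp_lincomb_sq_le[OF assms]])

end
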